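(* Let $G$ be a graph on $n$ vertices, $t\ge 1$ an integer, and let $G'$, $\alpha$, $\beta$ be as in the construction below, with $k=n+t+1$ and $\ell=2t+2t^2$. If $\mathcal{C}_k(G')$ contains a path from $\alpha$ to $\beta$ of length at most $\ell$, then $G$ has an independent set of size at least $t-1$.
   Context: Construction: with $V(G)=\{v_1,\ldots,v_n\}$, $V(G')=V_G\cup V_B\cup V_C$, where $V_G=\{g_1,\ldots,g_n\}$ induces a copy of $G$ ($g_ig_j$ an edge iff $v_iv_j\in E(G)$); $V_B=\{b^i_j\mid i,j\in\{1,\ldots,t\}\}$ with $b^i_jb^{i'}_{j'}$ an edge iff $i\ne i'$ and $j\ne j'$; all edges between $V_G$ and $V_B$ are present; $V_C=C_1\cup\cdots\cup C_{n+t+1}$ with the $C_i$ pairwise disjoint independent sets of size $2t+2t^2$ and no edges among vertices of $V_C$; each $g_i$ is adjacent to all of $V_C\setminus(C_i\cup C_{n+t+1})$; each vertex of $V_B$ is adjacent to all of $C_{n+t+1}$; no other edges. $\alpha(g_i)=i$, $\alpha(c)=i$ for $c\in C_i$, $\alpha(b^i_j)=n+i$; $\beta(v)=\alpha(v)$ for $v\in V_G\cup V_C$ and $\beta(b^i_j)=n+j$. A $k$-coloring is a map $V\to\{1,\ldots,k\}$ with adjacent vertices colored differently; $\mathcal{C}_k(G')$ is the graph on the $k$-colorings of $G'$, two adjacent iff they differ on exactly one vertex. *)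

theory Defs
  imports Main
begin

definition is_graph :: "nat \<Rightarrow> (nat \<Rightarrow> nat \<Rightarrow> bool) \<Rightarrow> bool" where
  "is_graph n E \<longleftrightarrow> (\<forall>i\<in>{1..n}. \<forall>j\<in>{1..n}. E i j \<longleftrightarrow> E j i) \<and> (\<forall>i\<in>{1..n}. \<not> E i i)"

definition independent_set :: "nat \<Rightarrow> (nat \<Rightarrow> nat \<Rightarrow> bool) \<Rightarrow> nat set \<Rightarrow> bool" where
  "independent_set n E S \<longleftrightarrow> S \<subseteq> {1..n} \<and> (\<forall>i\<in>S. \<forall>j\<in>S. \<not> E i j)"

text \<open>Vertices of G': Gv i = g_i, Bv i j = b^i_j, Cv i m = the m-th vertex of C_i.\<close>
datatype vtx = Gv nat | Bv nat nat | Cv nat nat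

definition Vset :: "nat \<Rightarrow> nat \<Rightarrow> vtx set" where
  "Vset n t = Gv ` {1..n} \<union> {Bv i j | i j. i \<in> {1..t} \<and> j \<in> {1..t}}
     \<union> {Cv i m | i m. i \<in> {1..n+t+1} \<and> m \<in> {1..2*t+2*t^2}}"

text \<open>One-directional edge description; adjacency of G' is its symmetric closure.\<close>
fun edge0 :: "nat \<Rightarrow> (nat \<Rightarrow> nat \<Rightarrow> bool) \<Rightarrow> nat \<Rightarrow> vtx \<Rightarrow> vtx \<Rightarrow> bool" where
  "edge0 n E t (Gv i) (Gv j) = E i j"
| "edge0 n E t (Bv i j) (Bv i' j') = (i \<noteq> i' \<and> j \<noteq> j')"
| "edge0 n E t (Gv i) (Bv _ _) = True"
| "edge0 n E t (Gv i) (Cv j _) = (j \<noteq> i \<and> j \<noteq> n+t+1)"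
| "edge0 n E t (Bv _ _) (Cv j _) = (j = n+t+1)"
| "edge0 n E t _ _ = False"

definition adj :: "nat \<Rightarrow> (nat \<Rightarrow> nat \<Rightarrow> bool) \<Rightarrow> nat \<Rightarrow> vtx \<Rightarrow> vtx \<Rightarrow> bool" where
  "adj n E t u v \<longleftrightarrow> u \<in> Vset n t \<and> v \<in> Vset n t \<and> (edge0 n E t u v \<or> edge0 n E t v u)"

text \<open>A k-colouring of G': a map V(G') \<rightarrow> {1..k} (represented extensionally,
value 0 outside V(G')) with adjacent vertices coloured differently.\<close>
definition is_coloring :: "nat \<Rightarrow> (nat \<Rightarrow> nat \<Rightarrow> bool) \<Rightarrow> nat \<Rightarrow> nat \<Rightarrow> (vtx \<Rightarrow> nat) \<Rightarrow> bool" where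
  "is_coloring n E t k f \<longleftrightarrow>
     (\<forall>v\<in>Vset n t. f v \<in> {1..k}) \<and> (\<forall>v. v \<notin> Vset n t \<longrightarrow> f v = 0) \<and>
     (\<forall>u v. adj n E t u v \<longrightarrow> f u \<noteq> f v)"

definition recol_adj :: "nat \<Rightarrow> (nat \<Rightarrow> nat \<Rightarrow> bool) \<Rightarrow> nat \<Rightarrow> nat \<Rightarrow> (vtx \<Rightarrow> nat) \<Rightarrow> (vtx \<Rightarrow> nat) \<Rightarrow> bool" where
  "recol_adj n E t k f g \<longleftrightarrow> is_coloring n E t k f \<and> is_coloring n E t k g \<and>
     card {v \<in> Vset n t. f v \<noteq> g v} = 1"

text \<open>A path in C_k(G') from f to g of length len(ps) - 1 (list of its vertices).\<close>
definition recol_path :: "nat \<Rightarrow> (nat \<Rightarrow> nat \<Rightarrow> bool) \<Rightarrow> nat \<Rightarrow> nat \<Rightarrow> (vtx \<Rightarrow> nat) list \<Rightarrow> bool" where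
  "recol_path n E t k ps \<longleftrightarrow> ps \<noteq> [] \<and> distinct ps \<and> (\<forall>p\<in>set ps. is_coloring n E t k p) \<and>
     (\<forall>i. Suc i < length ps \<longrightarrow> recol_adj n E t k (ps ! i) (ps ! Suc i))"

definition alpha_col :: "nat \<Rightarrow> nat \<Rightarrow> vtx \<Rightarrow> nat" where
  "alpha_col n t v = (if v \<in> Vset n t then
     (case v of Gv i \<Rightarrow> i | Bv i j \<Rightarrow> n + i | Cv i m \<Rightarrow> i) else 0)"

definition beta_col :: "nat \<Rightarrow> nat \<Rightarrow> vtx \<Rightarrow> nat" where
  "beta_col n t v = (if v \<in> Vset n t then
     (case v of Gv i \<Rightarrow> i | Bv i j \<Rightarrow> n + j | Cv i m \<Rightarrow> i) else 0)"

end

theory Submission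
  imports Defs
begin

(* Each step of a reconfiguration path recolours exactly one vertex, so a
   path of length T changes the colour of at most T vertices.  Since every class C_c has
   l = 2t + 2t^2 vertices, a path of length <= l can never give a vertex v a colour c
   that is the alpha-colour of a whole class C_c adjacent to v: v together with C_c would
   be l + 1 changed vertices.  Hence every g_i only ever carries colour i or k, and the
   vertices of V_B never carry colour k.
   The vertices of V_B form a "rook colouring": b^i_j and b^i'_j' must differ whenever
   they differ in both indices.  Consider the first colouring f on the path in which some
   row of V_B is rainbow (alpha has no rainbow row, beta has only rainbow rows).  In f all
   other rows still repeat a colour, and a counting argument on rook colourings shows
   that f uses at least 2t - 1 colours on V_B.  At most t of them lie in {n+1..n+t};
   every other one is some c <= n with f(g_c) = k, and these g_c form an independent set. *)

section \<open>Counting changed vertices along a sequence of single recolourings\<close>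

lemma card_changed_le_steps:
  fixes ps :: "('v \<Rightarrow> 'c) list"
  assumes steps: "\<And>j. Suc j < length ps \<Longrightarrow> card {x \<in> V. (ps!j) x \<noteq> (ps!Suc j) x} = 1"
    and "A \<subseteq> V" and "\<forall>x\<in>A. (ps!0) x \<noteq> (ps!T) x" and "T < length ps"
  shows "card A \<le> T"
  using assms(2-4)
proof (induction T arbitrary: A)
  case 0
  then show ?case by simp
next
  case (Suc T)
  obtain v where v: "{x \<in> V. (ps!T) x \<noteq> (ps!Suc T) x} = {v}"
    using steps[of T] Suc.prems(3) by (auto simp: card_1_singleton_iff)
  have "\<forall>x\<in>A - {v}. (ps!0) x \<noteq> (ps!T) x"
  proof
    fix x assume x: "x \<in> A - {v}"
    then have "(ps!T) x = (ps!Suc T) x" using v Suc.prems(1) by blast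
    then show "(ps!0) x \<noteq> (ps!T) x" using x Suc.prems(2) by simp
  qed
  then have "card (A - {v}) \<le> T"
    using Suc.IH[of "A - {v}"] Suc.prems(1,3) by auto
  moreover have "card A - 1 \<le> card (A - {v})"
    using diff_card_le_card_Diff[of "{v}" A] by simp
  ultimately show ?case by linarith
qed

section \<open>Rook colourings\<close>

text \<open>A colouring of the grid I \<times> J in which two cells differing in both coordinates get
  different colours; the vertices of V_B carry exactly such a colouring.\<close>
definition rook_proper :: "'a set \<Rightarrow> 'b set \<Rightarrow> ('a \<Rightarrow> 'b \<Rightarrow> 'c) \<Rightarrow> bool" where
  "rook_proper I J col \<longleftrightarrow>
     (\<forall>i\<in>I. \<forall>i'\<in>I. \<forall>j\<in>J. \<forall>j'\<in>J. i \<noteq> i' \<longrightarrow> j \<noteq> j' \<longrightarrow> col i j \<noteq> col i' j')"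

definition rook_colours :: "'a set \<Rightarrow> 'b set \<Rightarrow> ('a \<Rightarrow> 'b \<Rightarrow> 'c) \<Rightarrow> 'c set" where
  "rook_colours I J col = {col i j | i j. i \<in> I \<and> j \<in> J}"

lemma rook_proper_transpose: "rook_proper I J col \<Longrightarrow> rook_proper J I (\<lambda>j i. col i j)"
  unfolding rook_proper_def by blast

lemma finite_rook_colours: "finite I \<Longrightarrow> finite J \<Longrightarrow> finite (rook_colours I J col)"
  unfolding rook_colours_def
  using finite_image_set2[of "\<lambda>i. i \<in> I" "\<lambda>j. j \<in> J" col] by simp

text \<open>A colour repeated inside row i occurs in no other row: any other cell of that colour
  would differ in both coordinates from one of the two repeated cells.\<close>
lemma row_repeat_colour_in_row:
  assumes "rook_proper I J col" and "i \<in> I" "i2 \<in> I" "a \<in> J" "a' \<in> J" "a2 \<in> J"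
    and "a \<noteq> a'" "col i a = col i a'" "col i2 a2 = col i a"
  shows "i2 = i"
  using assms unfolding rook_proper_def by metis

lemma non_injective_witnesses:
  assumes "\<forall>i\<in>I. \<not> inj_on (f i) J"
  obtains a a' where "\<forall>i\<in>I. a i \<in> J \<and> a' i \<in> J \<and> a i \<noteq> a' i \<and> f i (a i) = f i (a' i)"
proof -
  have "\<forall>i\<in>I. \<exists>x. fst x \<in> J \<and> snd x \<in> J \<and> fst x \<noteq> snd x \<and> f i (fst x) = f i (snd x)"
    using assms unfolding inj_on_def by fastforce
  then obtain w where "\<forall>i\<in>I. fst (w i) \<in> J \<and> snd (w i) \<in> J \<and> fst (w i) \<noteq> snd (w i)
      \<and> f i (fst (w i)) = f i (snd (w i))"
    by (rule bchoice[elim_format]) blast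
  then show ?thesis using that[of "\<lambda>i. fst (w i)" "\<lambda>i. snd (w i)"] by blast
qed

text \<open>Picking one repeated colour from each row of I' and each column of J' yields
  card I' + card J' distinct colours: a colour repeated in a row lies in no other row,
  and a colour repeated in a column lies in no other column.\<close>
lemma rook_colours_repeated_lines:
  assumes proper: "rook_proper I J col" and fin: "finite I" "finite J"
    and sub: "I' \<subseteq> I" "J' \<subseteq> J"
    and rows: "\<forall>i\<in>I'. \<not> inj_on (col i) J"
    and cols: "\<forall>j\<in>J'. \<not> inj_on (\<lambda>i. col i j) I"
  shows "card I' + card J' \<le> card (rook_colours I J col)"
proof -
  obtain a a' where a: "\<forall>i\<in>I'. a i \<in> J \<and> a' i \<in> J \<and> a i \<noteq> a' i \<and> col i (a i) = col i (a' i)"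
    using non_injective_witnesses[OF rows] by blast
  obtain b b' where b: "\<forall>j\<in>J'. b j \<in> I \<and> b' j \<in> I \<and> b j \<noteq> b' j \<and> col (b j) j = col (b' j) j"
    using non_injective_witnesses[of J' "\<lambda>j i. col i j" I] cols by blast
  define p where "p i = col i (a i)" for i
  define q where "q j = col (b j) j" for j
  have inj_p: "inj_on p I'"
  proof (rule inj_onI)
    fix i i' assume i: "i \<in> I'" "i' \<in> I'" "p i = p i'"
    show "i = i'"
      using row_repeat_colour_in_row[OF proper, of i' i "a i'" "a' i'" "a i"] a i sub
      unfolding p_def by auto
  qed
  have inj_q: "inj_on q J'"
  proof (rule inj_onI)
    fix j j' assume j: "j \<in> J'" "j' \<in> J'" "q j = q j'"
    show "j = j'"
      using row_repeat_colour_in_row[OF rook_proper_transpose[OF proper], of j' j "b j'" "b' j'" "b j"]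
        b j sub unfolding q_def by auto
  qed
  have disjoint: "p ` I' \<inter> q ` J' = {}"
  proof (rule ccontr)
    assume "p ` I' \<inter> q ` J' \<noteq> {}"
    then obtain i j where ij: "i \<in> I'" "j \<in> J'" "p i = q j" by blast
    have ai: "i \<in> I" "a i \<in> J" "a' i \<in> J" "a i \<noteq> a' i" "col i (a i) = col i (a' i)"
      using a ij(1) sub by auto
    have bj: "j \<in> J" "b j \<in> I" "b' j \<in> I" "b j \<noteq> b' j" "col (b j) j = col i (a i)"
      "col (b' j) j = col i (a i)"
      using b ij sub unfolding p_def q_def by auto
    have "b j = i" "b' j = i"
      using row_repeat_colour_in_row[OF proper ai(1) bj(2) ai(2,3) bj(1) ai(4,5) bj(5)]
        row_repeat_colour_in_row[OF proper ai(1) bj(3) ai(2,3) bj(1) ai(4,5) bj(6)] by auto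
    then show False using bj(4) by simp
  qed
  have "p ` I' \<union> q ` J' \<subseteq> rook_colours I J col"
    using a b sub unfolding p_def q_def rook_colours_def by blast
  then have "card (p ` I' \<union> q ` J') \<le> card (rook_colours I J col)"
    using finite_rook_colours[OF fin] by (rule card_mono[rotated])
  moreover have "finite I'" "finite J'" using sub fin finite_subset by auto
  then have "card (p ` I' \<union> q ` J') = card I' + card J'"
    using card_Un_disjoint[OF _ _ disjoint] card_image[OF inj_p] card_image[OF inj_q] by simp
  ultimately show ?thesis by simp
qed

lemma rook_colours_rainbow_lines:
  assumes proper: "rook_proper I J col" and fin: "finite I" "finite J"
    and r: "r \<in> I" "inj_on (col r) J" and c: "c \<in> J" "inj_on (\<lambda>i. col i c) I"
  shows "card J + (card I - 1) \<le> card (rook_colours I J col)"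
proof -
  define W where "W = (\<lambda>i. col i c) ` (I - {r})"
  have disjoint: "col r ` J \<inter> W = {}"
  proof (rule ccontr)
    assume "col r ` J \<inter> W \<noteq> {}"
    then obtain a i where ai: "a \<in> J" "i \<in> I" "i \<noteq> r" "col r a = col i c"
      unfolding W_def by blast
    show False
    proof (cases "a = c")
      case True
      then show ?thesis using ai c r(1) by (metis inj_onD)
    next
      case False
      then show ?thesis using ai proper r(1) c(1) unfolding rook_proper_def by metis
    qed
  qed
  have "col r ` J \<union> W \<subseteq> rook_colours I J col"
    using r c unfolding W_def rook_colours_def by blast
  then have "card (col r ` J \<union> W) \<le> card (rook_colours I J col)"
    using finite_rook_colours[OF fin] by (rule card_mono[rotated])
  moreover have "card W = card I - 1"
    unfolding W_def using c r fin
    by (simp add: card_image inj_on_subset[of _ I] card_Diff_singleton)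
  moreover have "card (col r ` J \<union> W) = card J + card W"
    using card_Un_disjoint[OF _ _ disjoint] card_image[OF r(2)] fin
    unfolding W_def by simp
  ultimately show ?thesis by simp
qed

lemma rook_colours_lower_bound:
  assumes proper: "rook_proper I J col" and fin: "finite I" "finite J"
    and r: "r \<in> I" "inj_on (col r) J"
    and other_rows: "\<forall>i\<in>I - {r}. \<not> inj_on (col i) J"
  shows "card I + card J - 1 \<le> card (rook_colours I J col)"
proof (cases "\<exists>c\<in>J. inj_on (\<lambda>i. col i c) I")
  case True
  then obtain c where "c \<in> J" "inj_on (\<lambda>i. col i c) I" by blast
  from rook_colours_rainbow_lines[OF proper fin r this] show ?thesis by simp
next
  case False
  have "card (I - {r}) + card J \<le> card (rook_colours I J col)"
    using False other_rows by (intro rook_colours_repeated_lines[OF proper fin]) auto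
  then show ?thesis using r(1) fin by (simp add: card_Diff_singleton)
qed

lemma Vset_G [simp]: "Gv i \<in> Vset n t \<longleftrightarrow> i \<in> {1..n}"
  by (auto simp: Vset_def)

lemma Vset_B [simp]: "Bv i j \<in> Vset n t \<longleftrightarrow> i \<in> {1..t} \<and> j \<in> {1..t}"
  by (auto simp: Vset_def)

lemma Vset_C [simp]: "Cv i m \<in> Vset n t \<longleftrightarrow> i \<in> {1..n+t+1} \<and> m \<in> {1..2*t+2*t^2}"
  by (auto simp: Vset_def)

lemma alpha_col_simps [simp]:
  "i \<in> {1..n} \<Longrightarrow> alpha_col n t (Gv i) = i"
  "i \<in> {1..t} \<Longrightarrow> j \<in> {1..t} \<Longrightarrow> alpha_col n t (Bv i j) = n + i"
  "c \<in> {1..n+t+1} \<Longrightarrow> m \<in> {1..2*t+2*t^2} \<Longrightarrow> alpha_col n t (Cv c m) = c"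
  by (simp_all add: alpha_col_def)

lemma beta_col_B [simp]: "i \<in> {1..t} \<Longrightarrow> j \<in> {1..t} \<Longrightarrow> beta_col n t (Bv i j) = n + j"
  by (simp add: beta_col_def)

lemma coloring_adj_neq: "is_coloring n E t k f \<Longrightarrow> adj n E t u v \<Longrightarrow> f u \<noteq> f v"
  by (simp add: is_coloring_def)

lemma coloring_range: "is_coloring n E t k f \<Longrightarrow> v \<in> Vset n t \<Longrightarrow> f v \<in> {1..k}"
  by (simp add: is_coloring_def)

lemma coloring_rook_proper:
  "is_coloring n E t k f \<Longrightarrow> rook_proper {1..t} {1..t} (\<lambda>i j. f (Bv i j))"
proof (unfold rook_proper_def, intro ballI impI)
  fix i i' j j' assume "is_coloring n E t k f" "i \<in> {1..t}" "i' \<in> {1..t}" "j \<in> {1..t}" "j' \<in> {1..t}"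
    "i \<noteq> i'" "j \<noteq> j'"
  then show "f (Bv i j) \<noteq> f (Bv i' j')"
    by (intro coloring_adj_neq[of n E t k f]) (auto simp: adj_def)
qed

lemma coloring_top_class_independent:
  assumes "is_coloring n E t k f"
  shows "independent_set n E {c \<in> {1..n}. f (Gv c) = k}"
  unfolding independent_set_def
proof (intro conjI ballI notI)
  fix i j assume ij: "i \<in> {c \<in> {1..n}. f (Gv c) = k}" "j \<in> {c \<in> {1..n}. f (Gv c) = k}" "E i j"
  then have "adj n E t (Gv i) (Gv j)" by (auto simp: adj_def)
  then have "f (Gv i) \<noteq> f (Gv j)" by (rule coloring_adj_neq[OF assms])
  then show False using ij by simp
qed auto

section \<open>Short paths from alpha to beta\<close>

context
  fixes n t :: nat and E :: "nat \<Rightarrow> nat \<Rightarrow> bool" and ps :: "(vtx \<Rightarrow> nat) list"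
  assumes path: "recol_path n E t (n+t+1) ps"
    and hd_ps: "hd ps = alpha_col n t" and last_ps: "last ps = beta_col n t"
    and short: "length ps - 1 \<le> 2*t + 2*t^2"
begin

lemma path_nonempty: "ps \<noteq> []"
  using path by (simp add: recol_path_def)

lemma path_coloring: "T < length ps \<Longrightarrow> is_coloring n E t (n+t+1) (ps!T)"
  using path by (simp add: recol_path_def)

lemma path_first: "ps!0 = alpha_col n t"
  using hd_ps path_nonempty by (simp add: hd_conv_nth)

lemma path_last: "ps!(length ps - 1) = beta_col n t"
  using last_ps path_nonempty by (simp add: last_conv_nth)

lemma path_step: "Suc j < length ps \<Longrightarrow> card {v \<in> Vset n t. (ps!j) v \<noteq> (ps!Suc j) v} = 1"
  using path by (simp add: recol_path_def recol_adj_def)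

lemma few_changed_vertices:
  assumes "A \<subseteq> Vset n t" "\<forall>v\<in>A. alpha_col n t v \<noteq> (ps!T) v" "T < length ps"
  shows "card A \<le> 2*t + 2*t^2"
  using card_changed_le_steps[of ps "Vset n t" A T] path_step assms short
  by (simp add: path_first)

text \<open>A vertex v can never take the colour c of a class C_c that is entirely adjacent to v,
  unless c is already its alpha-colour: v and all of C_c would have been recoloured.\<close>
lemma class_colour_forbidden:
  assumes T: "T < length ps" and c: "c \<in> {1..n+t+1}" and v: "v \<in> Vset n t"
    and alpha_v: "alpha_col n t v \<noteq> c"
    and adj_class: "\<And>m. m \<in> {1..2*t+2*t^2} \<Longrightarrow> adj n E t v (Cv c m)"
  shows "(ps!T) v \<noteq> c"
proof
  assume colour_v: "(ps!T) v = c"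
  define A where "A = insert v (Cv c ` {1..2*t+2*t^2})"
  have v_not_C: "v \<notin> Cv c ` {1..2*t+2*t^2}"
    using adj_class[of 1] by (auto simp: adj_def)
  have "\<forall>w\<in>A. alpha_col n t w \<noteq> (ps!T) w"
    using alpha_v colour_v c coloring_adj_neq[OF path_coloring[OF T] adj_class]
    by (auto simp: A_def)
  moreover have "A \<subseteq> Vset n t" using v c by (auto simp: A_def)
  ultimately have "card A \<le> 2*t + 2*t^2" using few_changed_vertices T by blast
  moreover have "card A = 2*t + 2*t^2 + 1"
    using v_not_C by (simp add: A_def card_image inj_on_def)
  ultimately show False by simp
qed

lemma G_colour:
  assumes T: "T < length ps" and i: "i \<in> {1..n}"
  shows "(ps!T) (Gv i) = i \<or> (ps!T) (Gv i) = n+t+1"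
proof (rule ccontr)
  let ?c = "(ps!T) (Gv i)"
  assume "\<not> (?c = i \<or> ?c = n+t+1)"
  moreover have "?c \<in> {1..n+t+1}"
    using coloring_range[OF path_coloring[OF T]] i by simp
  ultimately have "(ps!T) (Gv i) \<noteq> ?c"
    using i by (intro class_colour_forbidden[OF T]) (auto simp: adj_def)
  then show False by simp
qed

lemma B_colour_not_top:
  assumes "T < length ps" "i \<in> {1..t}" "j \<in> {1..t}"
  shows "(ps!T) (Bv i j) \<noteq> n+t+1"
  using assms by (intro class_colour_forbidden) (auto simp: adj_def)

lemma B_colours_subset:
  assumes T: "T < length ps"
  shows "rook_colours {1..t} {1..t} (\<lambda>i j. (ps!T) (Bv i j))
           \<subseteq> {n+1..n+t} \<union> {c \<in> {1..n}. (ps!T) (Gv c) = n+t+1}"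
proof
  let ?f = "ps!T"
  fix x assume "x \<in> rook_colours {1..t} {1..t} (\<lambda>i j. ?f (Bv i j))"
  then obtain i j where ij: "i \<in> {1..t}" "j \<in> {1..t}" and x: "x = ?f (Bv i j)"
    by (auto simp: rook_colours_def)
  have "x \<in> {1..n+t+1}" "x \<noteq> n+t+1"
    using coloring_range[OF path_coloring[OF T]] B_colour_not_top[OF T ij] ij x by auto
  moreover have "?f (Gv x) = n+t+1" if "x \<in> {1..n}"
  proof -
    have "adj n E t (Gv x) (Bv i j)" using that ij by (auto simp: adj_def)
    then have "?f (Gv x) \<noteq> x" using coloring_adj_neq[OF path_coloring[OF T]] x by metis
    then show ?thesis using G_colour[OF T that] by simp
  qed
  ultimately show "x \<in> {n+1..n+t} \<union> {c \<in> {1..n}. ?f (Gv c) = n+t+1}"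
    by (cases "x \<le> n") auto
qed

abbreviation rainbow_row :: "nat \<Rightarrow> nat \<Rightarrow> bool" where
  "rainbow_row T i \<equiv> inj_on (\<lambda>j. (ps!T) (Bv i j)) {1..t}"

text \<open>Some colouring on the path has exactly one rainbow row: take the first colouring with
  a rainbow row; the single vertex recoloured to create it lies in that row, so all other
  rows still repeat a colour.\<close>
lemma first_rainbow_row:
  assumes t2: "t \<ge> 2"
  obtains T r where "T < length ps" "r \<in> {1..t}" "rainbow_row T r"
    "\<forall>i\<in>{1..t} - {r}. \<not> rainbow_row T i"
proof -
  define has_rainbow where "has_rainbow T \<longleftrightarrow> (\<exists>r\<in>{1..t}. rainbow_row T r)" for T
  let ?L = "length ps - 1"
  have "has_rainbow ?L"
    using t2 unfolding has_rainbow_def path_last by (auto simp: inj_on_def intro!: bexI[of _ 1])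
  define T where "T = (LEAST T. has_rainbow T)"
  have T_rainbow: "has_rainbow T" and T_le: "T \<le> ?L"
    using LeastI[of has_rainbow, OF \<open>has_rainbow ?L\<close>] Least_le[of has_rainbow, OF \<open>has_rainbow ?L\<close>]
    unfolding T_def by auto
  have T_len: "T < length ps" using T_le path_nonempty by (cases ps) auto
  have "\<not> rainbow_row 0 i" if "i \<in> {1..t}" for i
  proof
    assume "rainbow_row 0 i"
    moreover have "(ps!0) (Bv i 1) = (ps!0) (Bv i 2)" using that t2 by (simp add: path_first)
    ultimately have "(1::nat) = 2" by (rule inj_onD) (use t2 in auto)
    then show False by simp
  qed
  then have "\<not> has_rainbow 0" unfolding has_rainbow_def by blast
  then have T_pos: "T \<noteq> 0" using T_rainbow by (metis)
  then have before: "\<not> has_rainbow (T - 1)"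
    unfolding T_def by (intro not_less_Least) (simp add: T_def[symmetric])
  obtain r where r: "r \<in> {1..t}" "rainbow_row T r"
    using T_rainbow unfolding has_rainbow_def by blast
  obtain v0 where v0: "{v \<in> Vset n t. (ps!(T-1)) v \<noteq> (ps!T) v} = {v0}"
    using path_step[of "T-1"] T_len T_pos by (auto simp: card_1_singleton_iff)
  have row_unchanged: "rainbow_row T i \<longleftrightarrow> rainbow_row (T-1) i"
    if "i \<in> {1..t}" "\<forall>j. v0 \<noteq> Bv i j" for i
  proof (rule inj_on_cong)
    fix j assume "j \<in> {1..t}"
    then have "Bv i j \<in> Vset n t" using that(1) by simp
    then show "(ps!T) (Bv i j) = (ps!(T-1)) (Bv i j)"
      using v0 that(2) by (metis (mono_tags, lifting) mem_Collect_eq singletonD)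
  qed
  have "\<exists>j. v0 = Bv r j"
    using row_unchanged[OF r(1)] r before unfolding has_rainbow_def by blast
  then have "\<not> rainbow_row T i" if "i \<in> {1..t} - {r}" for i
    using row_unchanged[of i] before that unfolding has_rainbow_def by blast
  then show ?thesis using that T_len r by blast
qed

text \<open>In that colouring V_B shows 2t - 1 colours, at most t of them above n; the remaining
  at least t - 1 colours name vertices g_c of the top colour class.\<close>
lemma independent_set_from_short_path:
  assumes t2: "t \<ge> 2"
  shows "\<exists>S. independent_set n E S \<and> card S \<ge> t - 1"
proof -
  obtain T r where T: "T < length ps" and r: "r \<in> {1..t}" "rainbow_row T r"
    and others: "\<forall>i\<in>{1..t} - {r}. \<not> rainbow_row T i"
    using first_rainbow_row[OF t2] by blast
  define S where "S = {c \<in> {1..n}. (ps!T) (Gv c) = n+t+1}"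
  have "2*t - 1 \<le> card (rook_colours {1..t} {1..t} (\<lambda>i j. (ps!T) (Bv i j)))"
    using rook_colours_lower_bound[OF coloring_rook_proper[OF path_coloring[OF T]] _ _ r others]
    by simp
  also have "\<dots> \<le> card ({n+1..n+t} \<union> S)"
    using B_colours_subset[OF T] unfolding S_def by (intro card_mono) auto
  also have "\<dots> \<le> t + card S"
    using card_Un_le[of "{n+1..n+t}" S] by simp
  finally have "t - 1 \<le> card S" by linarith
  moreover have "independent_set n E S"
    unfolding S_def by (rule coloring_top_class_independent[OF path_coloring[OF T]])
  ultimately show ?thesis by blast
qed

end

theorem mainTheorem4:
  fixes n t :: nat and E :: "nat \<Rightarrow> nat \<Rightarrow> bool"
  assumes "is_graph n E" and "t \<ge> 1"
    and "\<exists>ps. recol_path n E t (n+t+1) ps \<and> hd ps = alpha_col n t \<and> last ps = beta_col n t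
              \<and> length ps - 1 \<le> 2*t + 2*t^2"
  shows "\<exists>S. independent_set n E S \<and> card S \<ge> t - 1"
proof (cases "t \<ge> 2")
  case True
  from assms(3) obtain ps where "recol_path n E t (n+t+1) ps" "hd ps = alpha_col n t"
    "last ps = beta_col n t" "length ps - 1 \<le> 2*t + 2*t^2" by blast
  from independent_set_from_short_path[OF this True] show ?thesis .
next
  case False
  then have "t - 1 = 0" by simp
  moreover have "independent_set n E {}" by (simp add: independent_set_def)
  ultimately show ?thesis by (metis card.empty le_refl)
qed

end
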